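(* In the weighted transaction packaging game described in the context, let $\mathrm{sum}=\sum_{\mathsf{tx}'\in M}s(\mathsf{tx}')$ and $$\hat p^{\mathrm{real}}(\mathsf{tx})=\frac{1}{\mathrm{sum}}\left(k+\sum_{\mathsf{tx}''\in M}s(\mathsf{tx}'')\frac{\ln v(\mathsf{tx})-\ln v(\mathsf{tx}'')}{\lambda}\right)\quad(\mathsf{tx}\in M).$$ For $x\in\mathbb{R}$ define $p^{\mathrm{real}}_x:M\to\mathbb{R}$ by $p^{\mathrm{real}}_x(\mathsf{tx})=0$ if $\hat p^{\mathrm{real}}(\mathsf{tx})\le x$, $p^{\mathrm{real}}_x(\mathsf{tx})=\hat p^{\mathrm{real}}(\mathsf{tx})-x$ if $x<\hat p^{\mathrm{real}}(\mathsf{tx})<x+1$, and $p^{\mathrm{real}}_x(\mathsf{tx})=1$ if $\hat p^{\mathrm{real}}(\mathsf{tx})\ge x+1$. Let $\hat x$ be the smallest real solution of the equation $\sum_{\mathsf{tx}\in M}\min(\max(\hat p^{\mathrm{real}}(\mathsf{tx})-x,0),1)\,s(\mathsf{tx})=k$. Then (1) $p^{\mathrm{real}}_{\hat x}(\mathsf{tx})\in[0,1]$ for all $\mathsf{tx}\in M$, and (2) $\sum_{\mathsf{tx}\in M}p^{\mathrm{real}}_{\hat x}(\mathsf{tx})s(\mathsf{tx})=k$. Furthermore, if there is a mixed strategy $\sigma$ with $p^\sigma(\mathsf{tx})=p^{\mathrm{real}}_{\hat x}(\mathsf{tx})$ for all $\mathsf{tx}\in M$, then $\sigma$ is an equilibrium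 strategy.
   Context: Weighted transaction packaging game. Fix a real $k>0$ (block capacity), a real $\lambda>0$ (network latency parameter), a finite set $M$ (the mempool) of transactions, a gas price function $v:M\to(0,\infty)$, and a size function $s:M\to(0,\infty)$ (block capacity used by each transaction), with $\sum_{\mathsf{tx}\in M}s(\mathsf{tx})\ge k$. Miners are indexed by $i\in[0,1]$. A pure strategy of a miner is a subset $D\subseteq M$ with $\sum_{\mathsf{tx}\in D}s(\mathsf{tx})\le k$; a mixed strategy is a probability distribution $\sigma$ on such subsets, with marginal probability $p^\sigma(\mathsf{tx})=\sum_D\sigma(D)\mathbf{1}[\mathsf{tx}\in D]$. Conditional on miner $i$ mining a block $B_i$ (drawn from her mixed strategy $\sigma_i$), the number $\gamma$ of other blocks mined is distributed as $\mathrm{Poisson}(\lambda)$; they are mined by miners chosen independently and uniformly at random from $[0,1]$, each such miner $j$ producing a block $B_j$ drawn independently from her mixed strategy $\sigma_j$. A transaction $\mathsf{tx}$ in $B_i$ pays gas fee $s(\mathsf{tx})v(\mathsf{tx})$ to miner $i$ only if no other mined block contains it, so the utility of miner $i$ is $u_i(\sigma_i,\sigma_{-i})=\sum_{\mathsf{tx}\in M}p^{\sigma_i}(\mathsf{tx})\,s(\mathsf{tx})\,v(\mathsf{tx})\,\Pr[\text{no other mined block }B_j\ (j\neq i)\text{ contains }\mathsf{tx}]$. A mixed strategy $\sigma^*$ is an equilibrium strategy if for every $i\in[0,1]$ and every mixed strategy $\sigma$, $u_i(\sigma,\sigma^*_{-i})\le u_i(\sigma^*,\sigma^*_{-i})$,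 where $\sigma^*_{-i}$ denotes the profile in which all miners other than $i$ use $\sigma^*$. *)

theory Defs
  imports "HOL-Probability.Probability"
begin

definition mixed_strategy :: "'a set \<Rightarrow> ('a \<Rightarrow> real) \<Rightarrow> real \<Rightarrow> 'a set pmf \<Rightarrow> bool" where
  "mixed_strategy M s k \<sigma> \<longleftrightarrow> (\<forall>D \<in> set_pmf \<sigma>. D \<subseteq> M \<and> (\<Sum>tx\<in>D. s tx) \<le> k)"

definition marginal :: "'a set pmf \<Rightarrow> 'a \<Rightarrow> real" where
  "marginal \<sigma> tx = measure_pmf.prob \<sigma> {D. tx \<in> D}"

fun blocks_pmf :: "'a set pmf \<Rightarrow> nat \<Rightarrow> 'a set list pmf" where
  "blocks_pmf \<sigma> 0 = return_pmf []"
| "blocks_pmf \<sigma> (Suc n) = do { B \<leftarrow> \<sigma>; Bs \<leftarrow> blocks_pmf \<sigma> n; return_pmf (B # Bs) }"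

text \<open>Distribution of the list of other mined blocks when all other miners use sigma:
  a Poisson(lambda) number of blocks, each drawn independently from sigma.\<close>
definition other_blocks :: "real \<Rightarrow> 'a set pmf \<Rightarrow> 'a set list pmf" where
  "other_blocks lam \<sigma> = poisson_pmf lam \<bind> blocks_pmf \<sigma>"

definition no_collision :: "real \<Rightarrow> 'a set pmf \<Rightarrow> 'a \<Rightarrow> real" where
  "no_collision lam \<sigma> tx = measure_pmf.prob (other_blocks lam \<sigma>) {Bs. \<forall>B \<in> set Bs. tx \<notin> B}"

definition utility :: "'a set \<Rightarrow> ('a \<Rightarrow> real) \<Rightarrow> ('a \<Rightarrow> real) \<Rightarrow> real \<Rightarrow> 'a set pmf \<Rightarrow> 'a set pmf \<Rightarrow> real" where
  "utility M v s lam \<sigma> \<tau> = (\<Sum>tx\<in>M. marginal \<sigma> tx * s tx * v tx * no_collision lam \<tau> tx)"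

definition equilibrium :: "'a set \<Rightarrow> ('a \<Rightarrow> real) \<Rightarrow> ('a \<Rightarrow> real) \<Rightarrow> real \<Rightarrow> real \<Rightarrow> 'a set pmf \<Rightarrow> bool" where
  "equilibrium M v s k lam \<sigma>s \<longleftrightarrow> mixed_strategy M s k \<sigma>s \<and>
     (\<forall>\<sigma>. mixed_strategy M s k \<sigma> \<longrightarrow> utility M v s lam \<sigma> \<sigma>s \<le> utility M v s lam \<sigma>s \<sigma>s)"

definition p_hat_real :: "'a set \<Rightarrow> ('a \<Rightarrow> real) \<Rightarrow> ('a \<Rightarrow> real) \<Rightarrow> real \<Rightarrow> real \<Rightarrow> 'a \<Rightarrow> real" where
  "p_hat_real M v s k lam tx =
     (k + (\<Sum>tx''\<in>M. s tx'' * ((ln (v tx) - ln (v tx'')) / lam))) / (\<Sum>tx'\<in>M. s tx')"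

definition p_real :: "'a set \<Rightarrow> ('a \<Rightarrow> real) \<Rightarrow> ('a \<Rightarrow> real) \<Rightarrow> real \<Rightarrow> real \<Rightarrow> real \<Rightarrow> 'a \<Rightarrow> real" where
  "p_real M v s k lam x tx =
     (if p_hat_real M v s k lam tx \<le> x then 0
      else if p_hat_real M v s k lam tx < x + 1 then p_hat_real M v s k lam tx - x
      else 1)"

end

theory Submission imports Defs begin

text \<open>If the other miners include a transaction with marginal probability \<open>p\<close>, the Poisson
  number of competing blocks thins to a Poisson number of colliding ones, so the transaction
  survives with probability \<open>exp (- lam * p)\<close>. Against a fixed profile a miner's utility is
  therefore linear in her own marginals, with weight \<open>v tx * exp (- lam * p tx)\<close> per unit of
  size, and maximising it under the capacity constraint is a fractional knapsack problem: a
  profile that fills the capacity and is of threshold type (marginal 0 below a weight \<open>c\<close>,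
  marginal 1 above it) is optimal. As \<open>ln v\<close> is affine in \<open>p_hat_real\<close> with slope \<open>lam\<close>,
  clipping \<open>p_hat_real - xhat\<close> to \<open>[0, 1]\<close> makes every fractional weight equal to
  \<open>c = exp (lam * xhat + a)\<close>, where \<open>a\<close> is the intercept of that affine relation.\<close>

lemma emeasure_pmf_avoiding:
  "emeasure (measure_pmf \<sigma>) {D. tx \<notin> D} = ennreal (1 - marginal \<sigma> tx)"
proof -
  have "{D. tx \<notin> D} = UNIV - {D. tx \<in> D}" by auto
  then show ?thesis
    unfolding marginal_def measure_pmf.emeasure_eq_measure
    using measure_pmf.prob_compl[of "{D. tx \<in> D}" \<sigma>] by simp
qed

lemma emeasure_blocks_pmf_avoiding:
  "emeasure (measure_pmf (blocks_pmf \<sigma> n)) {Bs. \<forall>B\<in>set Bs. tx \<notin> B} = ennreal ((1 - marginal \<sigma> tx) ^ n)"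
proof (induction n)
  case 0
  then show ?case by simp
next
  case (Suc n)
  have "emeasure (measure_pmf (blocks_pmf \<sigma> (Suc n))) {Bs. \<forall>B\<in>set Bs. tx \<notin> B}
     = (\<integral>\<^sup>+B. (\<integral>\<^sup>+Bs. indicator {D. tx \<notin> D} B * indicator {Bs. \<forall>B\<in>set Bs. tx \<notin> B} Bs
           \<partial>measure_pmf (blocks_pmf \<sigma> n)) \<partial>measure_pmf \<sigma>)"
    by (simp add: indicator_def of_bool_conj)
  also have "\<dots> = (\<integral>\<^sup>+B. indicator {D. tx \<notin> D} B * ennreal ((1 - marginal \<sigma> tx) ^ n) \<partial>measure_pmf \<sigma>)"
    by (simp add: nn_integral_cmult Suc.IH)
  also have "\<dots> = ennreal ((1 - marginal \<sigma> tx) ^ n) * ennreal (1 - marginal \<sigma> tx)"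
    by (subst mult.commute) (simp add: nn_integral_cmult emeasure_pmf_avoiding)
  also have "\<dots> = ennreal ((1 - marginal \<sigma> tx) ^ Suc n)"
    by (simp add: ennreal_mult'[symmetric] mult.commute marginal_def)
  finally show ?case .
qed

lemma nn_integral_poisson_power:
  assumes "lam > 0" "q \<ge> 0"
  shows "(\<integral>\<^sup>+n. ennreal (q ^ n) \<partial>measure_pmf (poisson_pmf lam)) = ennreal (exp (lam * (q - 1)))"
proof -
  have "(\<lambda>n. (lam * q) ^ n / fact n) sums exp (lam * q)"
    using exp_converges[of "lam * q"] by (simp add: divide_inverse mult.commute)
  from sums_mult[OF this, of "exp (- lam)"]
  have sums: "(\<lambda>n. lam ^ n / fact n * exp (- lam) * q ^ n) sums exp (lam * (q - 1))"
    by (simp add: power_mult_distrib field_simps mult_exp_exp)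
  have "(\<integral>\<^sup>+n. ennreal (q ^ n) \<partial>measure_pmf (poisson_pmf lam))
      = (\<Sum>n. ennreal (lam ^ n / fact n * exp (- lam) * q ^ n))"
    unfolding nn_integral_measure_pmf using assms
    by (simp add: ennreal_mult'[symmetric] ennreal_mult[symmetric] nn_integral_count_space_nat)
  also have "\<dots> = ennreal (exp (lam * (q - 1)))"
    using sums assms by (intro suminf_ennreal_eq) auto
  finally show ?thesis .
qed

lemma no_collision_eq_exp:
  assumes "lam > 0"
  shows "no_collision lam \<sigma> tx = exp (- lam * marginal \<sigma> tx)"
proof -
  have "1 - marginal \<sigma> tx \<ge> 0" unfolding marginal_def by simp
  then have "emeasure (measure_pmf (other_blocks lam \<sigma>)) {Bs. \<forall>B\<in>set Bs. tx \<notin> B}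
      = ennreal (exp (- lam * marginal \<sigma> tx))"
    unfolding other_blocks_def
    by (simp add: emeasure_blocks_pmf_avoiding nn_integral_poisson_power assms)
  then show ?thesis
    unfolding no_collision_def by (simp add: measure_pmf.emeasure_eq_measure)
qed

lemma marginal_size_sum_le:
  assumes fin: "finite M" and \<sigma>: "mixed_strategy M s k \<sigma>"
  shows "(\<Sum>tx\<in>M. marginal \<sigma> tx * s tx) \<le> k"
proof -
  define size_in where "size_in D = (\<Sum>tx\<in>M. indicator {D. tx \<in> D} D * s tx)" for D
  have int: "integrable (measure_pmf \<sigma>) (\<lambda>D. indicator {D. tx \<in> D} D * s tx)" for tx
    by (rule measure_pmf.integrable_const_bound[where B="\<bar>s tx\<bar>"]) (auto simp: indicator_def)
  have "(\<Sum>tx\<in>M. marginal \<sigma> tx * s tx) = measure_pmf.expectation \<sigma> size_in"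
    unfolding marginal_def size_in_def by (simp add: Bochner_Integration.integral_sum[OF int])
  also have "\<dots> \<le> measure_pmf.expectation \<sigma> (\<lambda>D. k)"
  proof (rule integral_mono_AE)
    show "integrable (measure_pmf \<sigma>) size_in"
      unfolding size_in_def by (rule Bochner_Integration.integrable_sum[OF int])
    show "AE D in measure_pmf \<sigma>. size_in D \<le> k"
    proof (rule AE_pmfI)
      fix D assume "D \<in> set_pmf \<sigma>"
      with \<sigma> have D: "D \<subseteq> M" "(\<Sum>tx\<in>D. s tx) \<le> k" unfolding mixed_strategy_def by auto
      have "size_in D = (\<Sum>tx\<in>D. s tx)"
        unfolding size_in_def indicator_def using D(1) fin
        by (simp add: sum.If_cases Int_absorb1)
      with D(2) show "size_in D \<le> k" by simp
    qed
  qed simp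
  finally show ?thesis by simp
qed

lemma weighted_sum_le_of_threshold:
  fixes p q w s :: "'a \<Rightarrow> real"
  assumes fin: "finite M" and s_nonneg: "\<forall>tx\<in>M. s tx \<ge> 0" and c: "c \<ge> 0"
    and threshold: "\<forall>tx\<in>M. (q tx - p tx) * (w tx - c) \<le> 0"
    and budget: "(\<Sum>tx\<in>M. q tx * s tx) \<le> (\<Sum>tx\<in>M. p tx * s tx)"
  shows "(\<Sum>tx\<in>M. q tx * s tx * w tx) \<le> (\<Sum>tx\<in>M. p tx * s tx * w tx)"
proof -
  have "(\<Sum>tx\<in>M. q tx * s tx * w tx) - (\<Sum>tx\<in>M. p tx * s tx * w tx)
      = (\<Sum>tx\<in>M. s tx * ((q tx - p tx) * (w tx - c)))
        + c * ((\<Sum>tx\<in>M. q tx * s tx) - (\<Sum>tx\<in>M. p tx * s tx))"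
    by (simp add: sum_subtractf[symmetric] sum_distrib_left sum.distrib[symmetric] algebra_simps)
  also have "\<dots> \<le> 0"
  proof -
    have "(\<Sum>tx\<in>M. s tx * ((q tx - p tx) * (w tx - c))) \<le> 0"
      using s_nonneg threshold by (intro sum_nonpos) (simp add: mult_nonneg_nonpos)
    moreover have "c * ((\<Sum>tx\<in>M. q tx * s tx) - (\<Sum>tx\<in>M. p tx * s tx)) \<le> 0"
      using c budget by (simp add: mult_nonneg_nonpos)
    ultimately show ?thesis by linarith
  qed
  finally show ?thesis by simp
qed

lemma equilibrium_if_threshold:
  assumes fin: "finite M" and lam: "lam > 0" and s_nonneg: "\<forall>tx\<in>M. s tx \<ge> 0"
    and \<sigma>: "mixed_strategy M s k \<sigma>" and full: "(\<Sum>tx\<in>M. marginal \<sigma> tx * s tx) = k"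
    and c: "c \<ge> 0"
    and threshold: "\<forall>tx\<in>M. \<forall>q\<in>{0..1}.
      (q - marginal \<sigma> tx) * (v tx * exp (- lam * marginal \<sigma> tx) - c) \<le> 0"
  shows "equilibrium M v s k lam \<sigma>"
  unfolding equilibrium_def
proof (intro conjI allI impI)
  fix \<sigma>' assume \<sigma>': "mixed_strategy M s k \<sigma>'"
  have "marginal \<sigma>' tx \<in> {0..1}" for tx
    unfolding marginal_def by simp
  then have "(\<Sum>tx\<in>M. marginal \<sigma>' tx * s tx * (v tx * exp (- lam * marginal \<sigma> tx)))
      \<le> (\<Sum>tx\<in>M. marginal \<sigma> tx * s tx * (v tx * exp (- lam * marginal \<sigma> tx)))"
    using threshold marginal_size_sum_le[OF fin \<sigma>'] full
    by (intro weighted_sum_le_of_threshold[OF fin s_nonneg c]) auto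
  then show "utility M v s lam \<sigma>' \<sigma> \<le> utility M v s lam \<sigma> \<sigma>"
    unfolding utility_def no_collision_eq_exp[OF lam] by (simp add: mult.assoc)
qed (rule \<sigma>)

lemma ln_eq_p_hat_real:
  assumes lam: "lam > 0" and S: "(\<Sum>t\<in>M. s t) \<noteq> 0" and tx: "tx \<in> M"
  shows "ln (v tx) = lam * p_hat_real M v s k lam tx
    + ((\<Sum>t\<in>M. s t * ln (v t)) - lam * k) / (\<Sum>t\<in>M. s t)"
proof -
  have "(\<Sum>t\<in>M. s t * ((ln (v tx) - ln (v t)) / lam))
      = ((\<Sum>t\<in>M. s t) * ln (v tx) - (\<Sum>t\<in>M. s t * ln (v t))) / lam"
    by (simp add: sum_divide_distrib[symmetric] right_diff_distrib sum_subtractf sum_distrib_right)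
  then have "p_hat_real M v s k lam tx
      = (k + ((\<Sum>t\<in>M. s t) * ln (v tx) - (\<Sum>t\<in>M. s t * ln (v t))) / lam) / (\<Sum>t\<in>M. s t)"
    unfolding p_hat_real_def by simp
  then show ?thesis using S lam by (simp add: field_simps)
qed

lemma p_real_eq_clip:
  "p_real M v s k lam x tx = min (max (p_hat_real M v s k lam tx - x) 0) 1"
  unfolding p_real_def by auto

lemma clip_exp_threshold:
  fixes lam h x a q :: real
  assumes lam: "lam > 0" and q: "q \<in> {0..1}"
  defines "p \<equiv> min (max (h - x) 0) 1"
  shows "(q - p) * (exp (lam * h + a) * exp (- lam * p) - exp (lam * x + a)) \<le> 0"
proof -
  have w: "exp (lam * h + a) * exp (- lam * p) = exp (lam * (h - p) + a)"
    by (simp add: mult_exp_exp algebra_simps)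
  consider "h \<le> x" "p = 0" | "h - p = x" | "h \<ge> x + 1" "p = 1"
    unfolding p_def by linarith
  then show ?thesis
  proof cases
    case 1
    then show ?thesis using q lam unfolding w by (simp add: mult_nonneg_nonpos)
  next
    case 2
    then show ?thesis unfolding w by simp
  next
    case 3
    then have "lam * x \<le> lam * (h - p)" using lam by simp
    then show ?thesis using q 3 unfolding w by (simp add: mult_nonpos_nonneg)
  qed
qed

theorem theorem4p1:
  fixes M :: "'a set" and v s :: "'a \<Rightarrow> real" and k lam xhat :: real
  assumes fin: "finite M"
    and k_pos: "k > 0" and lam_pos: "lam > 0"
    and v_pos: "\<forall>tx\<in>M. v tx > 0" and s_pos: "\<forall>tx\<in>M. s tx > 0"
    and cap: "(\<Sum>tx\<in>M. s tx) \<ge> k"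
    and xhat_sol: "(\<Sum>tx\<in>M. min (max (p_hat_real M v s k lam tx - xhat) 0) 1 * s tx) = k"
    and xhat_least: "\<forall>y. (\<Sum>tx\<in>M. min (max (p_hat_real M v s k lam tx - y) 0) 1 * s tx) = k \<longrightarrow> xhat \<le> y"
  shows "(\<forall>tx\<in>M. p_real M v s k lam xhat tx \<in> {0..1})
    \<and> (\<Sum>tx\<in>M. p_real M v s k lam xhat tx * s tx) = k
    \<and> (\<forall>\<sigma>. mixed_strategy M s k \<sigma> \<and> (\<forall>tx\<in>M. marginal \<sigma> tx = p_real M v s k lam xhat tx)
           \<longrightarrow> equilibrium M v s k lam \<sigma>)"
proof -
  define a where "a = ((\<Sum>t\<in>M. s t * ln (v t)) - lam * k) / (\<Sum>t\<in>M. s t)"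
  have S: "(\<Sum>t\<in>M. s t) \<noteq> 0" using cap k_pos by linarith
  have v_exp: "v tx = exp (lam * p_hat_real M v s k lam tx + a)" if "tx \<in> M" for tx
    using ln_eq_p_hat_real[OF lam_pos S that] v_pos that unfolding a_def by (metis exp_ln)
  have full: "(\<Sum>tx\<in>M. p_real M v s k lam xhat tx * s tx) = k"
    using xhat_sol by (simp add: p_real_eq_clip)
  have "equilibrium M v s k lam \<sigma>"
    if \<sigma>: "mixed_strategy M s k \<sigma>" and marg: "\<forall>tx\<in>M. marginal \<sigma> tx = p_real M v s k lam xhat tx"
    for \<sigma>
  proof (rule equilibrium_if_threshold[OF fin lam_pos _ \<sigma>, where c = "exp (lam * xhat + a)"])
    show "\<forall>tx\<in>M. s tx \<ge> 0" using s_pos by (simp add: less_imp_le)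
    show "(\<Sum>tx\<in>M. marginal \<sigma> tx * s tx) = k" using full marg by simp
    show "\<forall>tx\<in>M. \<forall>q\<in>{0..1}. (q - marginal \<sigma> tx)
        * (v tx * exp (- lam * marginal \<sigma> tx) - exp (lam * xhat + a)) \<le> 0"
      using clip_exp_threshold[OF lam_pos] marg v_exp by (simp add: p_real_eq_clip)
  qed simp
  with full show ?thesis by (simp add: p_real_eq_clip)
qed

end
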